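(* For $d\ge1$ let $$A_d=\frac1{d!}\sum_{(i_d,\dots,i_1)\in[m+n]^d}L(e_{i_d})\cdots L(e_{i_1})L(e_{i_1}^\ast)\cdots L(e_{i_d}^\ast).$$ Then $A_d(\varphi)=\varphi$ for every $\varphi\in\overline T_d(V)$.
   Context: Let $m,n\ge 1$ and $V=\mathbb C^{m|n}$ with standard basis $e_1,\dots,e_{m+n}$, where $|e_i|=0$ for $i\le m$ and $|e_i|=1$ for $i>m$; let $e_1^\ast,\dots,e_{m+n}^\ast$ be the dual basis with $|e_i^\ast|=|e_i|$. $[m+n]=\{1,\dots,m+n\}$. All vectors are homogeneous. A pure tensor $v_d\otimes\cdots\otimes v_1\in V^{\otimes d}$ is written $v_d\cdots v_1$ (factors indexed decreasingly from left to right). $\mathfrak S_d$ is the symmetric group on $\{1,\dots,d\}$, $s_i=(i\ i+1)$, $\mathfrak S_\infty=\bigcup_d\mathfrak S_d$, and for $k\ge1$ the group homomorphism $\sigma\mapsto\sigma^{\uparrow k}$ of $\mathfrak S_\infty$ is defined by $s_i^{\uparrow k}=s_{i+k}$. The right action of $\mathfrak S_d$ on $V^{\otimes d}$ is $(v_d\cdots v_1).s_i=(-1)^{|v_i||v_{i+1}|}v_d\cdots v_{i+2}v_iv_{i+1}v_{i-1}\cdots v_1$ (the factors in positions $i,i+1$ are swapped). Set $\overline T_d(V)=V^{\otimes d}\otimes_{\mathbb C\mathfrak S_d}\mathbb C\mathfrak S_\infty$ (so $\overline T_0(V)=\mathbb C\mathfrak S_\infty$) and $\overline T(V)=\bigoplus_{d\ge0}\overline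 T_d(V)$, with the associative product $(u_k\cdots u_1\otimes\tau)\cdot(v_d\cdots v_1\otimes\sigma)=u_k\cdots u_1v_d\cdots v_1\otimes\tau^{\uparrow d}\sigma$. For $\varphi\in\overline T(V)$, $L(\varphi)$ denotes left multiplication by $\varphi$; in particular $L(v)$ for $v\in V$ (identified with $v\otimes 1\in\overline T_1(V)$). For homogeneous $v^\ast\in V^\ast$, $L(v^\ast)$ is the linear map with $L(v^\ast)=0$ on $\overline T_0(V)$ and $$L(v^\ast)(v_d\cdots v_1\otimes\sigma)=\sum_{k=1}^d(-1)^{|v^\ast|(|v_d|+\cdots+|v_{k+1}|)}\langle v^\ast,v_k\rangle\, v_d\cdots\widehat{v_k}\cdots v_1\otimes s_{d-1}s_{d-2}\cdots s_k\,\sigma,$$ where $\widehat{v_k}$ means omission and the product $s_{d-1}\cdots s_k$ is $1$ for $k=d$; $L$ is extended linearly to all of $V^\ast$. *)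

theory Defs
  imports Complex_Main
begin

text \<open>
  Basis of V = C^{m|n}: indices 1..m+n, index i is odd iff m < i.
  A pure tensor of basis vectors v_d ... v_1 (v_k = e_(w!(k-1))) is encoded by the list
  w = [i_1, ..., i_d] (position k of the tensor is w!(k-1)).
  Permutations in S_infinity are bijections of nat fixing 0 with finite support
  (i.e. finitary permutations of {1,2,...}); group product is composition.
  Elements of the free space (before tensoring over C S_d) are functions
  (word, permutation) => complex with finite support; the relation subspace
  relsp is spanned by (w.s_i) (x) sigma - w (x) s_i sigma.
\<close>

type_synonym basis = "nat list \<times> (nat \<Rightarrow> nat)"
type_synonym fr = "basis \<Rightarrow> complex"

definition Sinf :: "(nat \<Rightarrow> nat) set" where
  "Sinf = {\<sigma>. bij \<sigma> \<and> \<sigma> 0 = 0 \<and> finite {j. \<sigma> j \<noteq> j}}"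

definition s :: "nat \<Rightarrow> nat \<Rightarrow> nat" where
  "s i = (\<lambda>j. if j = i then Suc i else if j = Suc i then i else j)"

definition odd_idx :: "nat \<Rightarrow> nat \<Rightarrow> bool" where
  "odd_idx m i = (m < i)"

definition par :: "nat \<Rightarrow> nat \<Rightarrow> nat" where
  "par m i = (if odd_idx m i then 1 else 0)"

definition delta :: "basis \<Rightarrow> fr" where
  "delta b = (\<lambda>c. if c = b then 1 else 0)"

definition lin :: "(basis \<Rightarrow> fr) \<Rightarrow> fr \<Rightarrow> fr" where
  "lin f x = (\<lambda>c. \<Sum>b\<in>{b. x b \<noteq> 0}. x b * f b c)"

fun cyc :: "nat \<Rightarrow> nat \<Rightarrow> (nat \<Rightarrow> nat)" where
  "cyc d k = (if d \<le> k then id else s (d - 1) \<circ> cyc (d - 1) k)"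

text \<open>delete the factor in position k (1-based)\<close>
definition del :: "nat list \<Rightarrow> nat \<Rightarrow> nat list" where
  "del w k = take (k - 1) w @ drop k w"

text \<open>L(e_i): left multiplication by e_i\<close>
definition Lvec :: "nat \<Rightarrow> fr \<Rightarrow> fr" where
  "Lvec i = lin (\<lambda>(w, \<sigma>). delta (w @ [i], \<sigma>))"

definition Lcov :: "nat \<Rightarrow> nat \<Rightarrow> fr \<Rightarrow> fr" where
  "Lcov m j = lin (\<lambda>(w, \<sigma>). \<lambda>c.
      \<Sum>k\<in>{1..length w}.
        (if w ! (k - 1) = j then
           (-1) ^ (par m j * card {l. k < l \<and> l \<le> length w \<and> odd_idx m (w ! (l - 1))})
           * delta (del w k, cyc (length w) k \<circ> \<sigma>) c
         else 0))"

text \<open>L(e_{i_d}) ... L(e_{i_1}) for the list [i_1, ..., i_d]\<close>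
fun Lvecs :: "nat list \<Rightarrow> fr \<Rightarrow> fr" where
  "Lvecs [] = id"
| "Lvecs (i # is) = Lvecs is \<circ> Lvec i"

text \<open>L(e_{i_1}^*) ... L(e_{i_d}^*) for the list [i_1, ..., i_d]\<close>
fun Lcovs :: "nat \<Rightarrow> nat list \<Rightarrow> fr \<Rightarrow> fr" where
  "Lcovs m [] = id"
| "Lcovs m (i # is) = Lcov m i \<circ> Lcovs m is"

definition A :: "nat \<Rightarrow> nat \<Rightarrow> nat \<Rightarrow> fr \<Rightarrow> fr" where
  "A m n d x = (\<lambda>c. (1 / of_nat (fact d)) *
      (\<Sum>is\<in>{is. length is = d \<and> set is \<subseteq> {1..m+n}}. Lvecs is (Lcovs m is x) c))"

text \<open>right action of s_i on a pure tensor: swap positions i, i+1 (1-based)\<close>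
definition swapw :: "nat list \<Rightarrow> nat \<Rightarrow> nat list" where
  "swapw w i = w[i - 1 := w ! i, i := w ! (i - 1)]"

definition relgen :: "nat \<Rightarrow> nat list \<Rightarrow> nat \<Rightarrow> (nat \<Rightarrow> nat) \<Rightarrow> fr" where
  "relgen m w i \<sigma> = (\<lambda>c.
     (-1) ^ (par m (w ! (i - 1)) * par m (w ! i)) * delta (swapw w i, \<sigma>) c
     - delta (w, s i \<circ> \<sigma>) c)"

text \<open>the subspace of relations defining V^{\<otimes>d} \<otimes>_{C S_d} C S_\<infinity> (all d)\<close>
inductive_set relsp :: "nat \<Rightarrow> nat \<Rightarrow> fr set" for m n where
  zero: "(\<lambda>_. 0) \<in> relsp m n"
| step: "r \<in> relsp m n \<Longrightarrow> 1 \<le> i \<Longrightarrow> i < length w \<Longrightarrow> set w \<subseteq> {1..m+n} \<Longrightarrow> \<sigma> \<in> Sinf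
         \<Longrightarrow> (\<lambda>c. r c + a * relgen m w i \<sigma> c) \<in> relsp m n"

definition Tbar_rep :: "nat \<Rightarrow> nat \<Rightarrow> nat \<Rightarrow> fr set" where
  "Tbar_rep m n d = {x. finite {b. x b \<noteq> 0} \<and>
     (\<forall>w \<sigma>. x (w, \<sigma>) \<noteq> 0 \<longrightarrow> length w = d \<and> set w \<subseteq> {1..m+n} \<and> \<sigma> \<in> Sinf)}"

end

theory Submission
  imports Defs
begin

text \<open>
  The operator \<open>N = \<Sum>\<^sub>i L(e\<^sub>i) L(e\<^sub>i\<^sup>*)\<close> acts on \<open>T\<^sub>d(V)\<close> as multiplication by \<open>d\<close>:
  on a pure tensor, its \<open>k\<close>-th term removes the \<open>k\<close>-th factor, twists the permutation by the
  cycle \<open>s\<^sub>d\<^sub>-\<^sub>1 \<cdots> s\<^sub>k\<close> and puts the factor back in front; modulo the relations defining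
  \<open>\<otimes>\<^sub>\<complex>\<^sub>\<SS>\<^sub>d\<close> this cycle moves the factor back to its old place, and the Koszul sign picked up on
  the way is exactly the sign of \<open>L(e\<^sub>i\<^sup>*)\<close>.  Splitting off the innermost pair of \<open>A\<^sub>d\<^sub>+\<^sub>1\<close> gives
  \<open>A\<^sub>d\<^sub>+\<^sub>1 = (d+1)\<^sup>-\<^sup>1 \<Sum>\<^sub>i L(e\<^sub>i) A\<^sub>d L(e\<^sub>i\<^sup>*)\<close>, and since \<open>L(e\<^sub>i\<^sup>*)\<close> lowers the degree by one,
  induction on \<open>d\<close> reduces the claim to \<open>N = d\<close>.
\<close>

section \<open>Finitary permutations\<close>

lemma id_in_Sinf: "id \<in> Sinf"
  by (simp add: Sinf_def)

lemma Sinf_comp: "\<sigma> \<in> Sinf \<Longrightarrow> \<tau> \<in> Sinf \<Longrightarrow> \<sigma> \<circ> \<tau> \<in> Sinf"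
proof -
  assume a: "\<sigma> \<in> Sinf" "\<tau> \<in> Sinf"
  have "{j. (\<sigma> \<circ> \<tau>) j \<noteq> j} \<subseteq> {j. \<tau> j \<noteq> j} \<union> {j. \<sigma> j \<noteq> j}" by auto
  then have "finite {j. (\<sigma> \<circ> \<tau>) j \<noteq> j}" using a by (auto simp: Sinf_def intro: finite_subset)
  then show ?thesis using a by (auto simp: Sinf_def bij_comp)
qed

lemma s_in_Sinf: "1 \<le> i \<Longrightarrow> s i \<in> Sinf"
proof -
  assume "1 \<le> i"
  have "bij (s i)" by (rule o_bij[of "s i"]) (auto simp: s_def fun_eq_iff)
  moreover have "finite {j. s i j \<noteq> j}"
    by (rule finite_subset[of _ "{i, Suc i}"]) (auto simp: s_def)
  ultimately show ?thesis using \<open>1 \<le> i\<close> by (simp add: Sinf_def s_def)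
qed

declare cyc.simps [simp del]

lemma cyc_refl: "cyc k k = id"
  by (simp add: cyc.simps)

lemma cyc_Suc: "k \<le> j \<Longrightarrow> cyc (Suc j) k = s j \<circ> cyc j k"
  by (subst cyc.simps) simp

lemma cyc_in_Sinf: "1 \<le> k \<Longrightarrow> cyc j k \<in> Sinf"
proof (induction j)
  case 0
  then show ?case by (simp add: cyc.simps id_in_Sinf[unfolded id_def])
next
  case (Suc j)
  show ?case
  proof (cases "Suc j \<le> k")
    case True
    then show ?thesis by (simp add: cyc.simps id_in_Sinf[unfolded id_def])
  next
    case False
    then have "cyc (Suc j) k = s j \<circ> cyc j k" by (simp add: cyc_Suc)
    moreover have "s j \<circ> cyc j k \<in> Sinf" using Suc False by (intro Sinf_comp s_in_Sinf) auto
    ultimately show ?thesis by (simp only:)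
  qed
qed

section \<open>Finitely supported functions and linear maps\<close>

definition supp :: "fr \<Rightarrow> basis set" where
  "supp x = {b. x b \<noteq> 0}"

lemma supp_zero [simp]: "supp (\<lambda>c. 0) = {}"
  by (simp add: supp_def)

lemma supp_delta [simp]: "supp (delta b) = {b}"
  unfolding supp_def delta_def by auto

lemma finite_supp_add: "finite (supp x) \<Longrightarrow> finite (supp y) \<Longrightarrow> finite (supp (\<lambda>c. x c + y c))"
  by (rule finite_subset[of _ "supp x \<union> supp y"]) (auto simp: supp_def)

lemma finite_supp_diff: "finite (supp x) \<Longrightarrow> finite (supp y) \<Longrightarrow> finite (supp (\<lambda>c. x c - y c))"
  by (rule finite_subset[of _ "supp x \<union> supp y"]) (auto simp: supp_def)

lemma finite_supp_scale: "finite (supp x) \<Longrightarrow> finite (supp (\<lambda>c. a * x c))"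
  by (rule finite_subset[of _ "supp x"]) (auto simp: supp_def)

lemma finite_supp_sum:
  "finite J \<Longrightarrow> (\<And>j. j \<in> J \<Longrightarrow> finite (supp (g j))) \<Longrightarrow> finite (supp (\<lambda>c. \<Sum>j\<in>J. g j c))"
  by (induction J rule: finite_induct) (simp_all add: finite_supp_add)

lemma delta_expansion: "finite (supp x) \<Longrightarrow> x = (\<lambda>c. \<Sum>b\<in>supp x. x b * delta b c)"
  by (auto simp: fun_eq_iff delta_def supp_def if_distrib cong: if_cong)

lemma lin_eq_sum: "finite S \<Longrightarrow> supp x \<subseteq> S \<Longrightarrow> lin f x c = (\<Sum>b\<in>S. x b * f b c)"
  unfolding lin_def supp_def by (rule sum.mono_neutral_left) auto

lemma supp_lin_subset: "supp (lin f x) \<subseteq> (\<Union>b\<in>supp x. supp (f b))"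
proof
  fix c assume "c \<in> supp (lin f x)"
  then have "(\<Sum>b\<in>{b. x b \<noteq> 0}. x b * f b c) \<noteq> 0" by (simp add: supp_def lin_def)
  then obtain b where "b \<in> {b. x b \<noteq> 0}" "x b * f b c \<noteq> 0"
    by (rule sum.not_neutral_contains_not_neutral)
  then have "b \<in> supp x" "c \<in> supp (f b)" by (auto simp: supp_def)
  then show "c \<in> (\<Union>b\<in>supp x. supp (f b))" by blast
qed

lemma lin_delta: "lin f (delta b) = f b"
  by (rule ext, subst lin_eq_sum[of "{b}"]) (simp_all, simp add: delta_def)

text \<open>Linearity is only required on finitely supported arguments, where \<^const>\<open>lin\<close> is linear.\<close>

definition fin_linear :: "(fr \<Rightarrow> fr) \<Rightarrow> bool" where
  "fin_linear T \<longleftrightarrow> (\<forall>x. finite (supp x) \<longrightarrow> finite (supp (T x))) \<and>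
     (\<forall>x y. finite (supp x) \<longrightarrow> finite (supp y) \<longrightarrow> T (\<lambda>c. x c + y c) = (\<lambda>c. T x c + T y c)) \<and>
     (\<forall>x a. finite (supp x) \<longrightarrow> T (\<lambda>c. a * x c) = (\<lambda>c. a * T x c))"

lemma fin_linear_finite: "fin_linear T \<Longrightarrow> finite (supp x) \<Longrightarrow> finite (supp (T x))"
  by (simp add: fin_linear_def)

lemma fin_linear_add:
  "fin_linear T \<Longrightarrow> finite (supp x) \<Longrightarrow> finite (supp y) \<Longrightarrow> T (\<lambda>c. x c + y c) = (\<lambda>c. T x c + T y c)"
  by (simp add: fin_linear_def)

lemma fin_linear_scale: "fin_linear T \<Longrightarrow> finite (supp x) \<Longrightarrow> T (\<lambda>c. a * x c) = (\<lambda>c. a * T x c)"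
  by (simp add: fin_linear_def)

lemma fin_linear_zero: "fin_linear T \<Longrightarrow> T (\<lambda>c. 0) = (\<lambda>c. 0)"
  using fin_linear_scale[of T "\<lambda>c. 0" 0] by (simp add: supp_def)

lemma fin_linear_diff:
  assumes "fin_linear T" "finite (supp x)" "finite (supp y)"
  shows "T (\<lambda>c. x c - y c) = (\<lambda>c. T x c - T y c)"
  using fin_linear_add[OF assms(1,2) finite_supp_scale[OF assms(3)], of "-1"]
    fin_linear_scale[OF assms(1,3), of "-1"]
  by simp

lemma fin_linear_sum:
  assumes T: "fin_linear T" and "finite J" and "\<And>j. j \<in> J \<Longrightarrow> finite (supp (g j))"
  shows "T (\<lambda>c. \<Sum>j\<in>J. g j c) = (\<lambda>c. \<Sum>j\<in>J. T (g j) c)"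
  using assms(2,3)
proof (induction J rule: finite_induct)
  case empty
  then show ?case using T by (simp add: fin_linear_zero)
next
  case (insert a F)
  then show ?case by (simp add: fin_linear_add[OF T] finite_supp_sum)
qed

lemma fin_linear_lin: "(\<And>b. finite (supp (f b))) \<Longrightarrow> fin_linear (lin f)"
proof -
  assume fin: "\<And>b. finite (supp (f b))"
  have "finite (supp (lin f x))" if "finite (supp x)" for x
    by (rule finite_subset[OF supp_lin_subset]) (use that fin in auto)
  moreover have "lin f (\<lambda>c. x c + y c) = (\<lambda>c. lin f x c + lin f y c)"
    if "finite (supp x)" "finite (supp y)" for x y
  proof -
    have "supp (\<lambda>c. x c + y c) \<subseteq> supp x \<union> supp y" by (auto simp: supp_def)
    then show ?thesis
      using that by (simp add: fun_eq_iff lin_eq_sum[of "supp x \<union> supp y"] distrib_right sum.distrib)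
  qed
  moreover have "lin f (\<lambda>c. a * x c) = (\<lambda>c. a * lin f x c)" if "finite (supp x)" for x a
  proof -
    have "supp (\<lambda>c. a * x c) \<subseteq> supp x" by (auto simp: supp_def)
    then show ?thesis
      using that by (simp add: fun_eq_iff lin_eq_sum[of "supp x"] sum_distrib_left mult.assoc)
  qed
  ultimately show ?thesis by (simp add: fin_linear_def)
qed

lemma fin_linear_id: "fin_linear id"
  by (simp add: fin_linear_def)

lemma fin_linear_comp: "fin_linear T \<Longrightarrow> fin_linear U \<Longrightarrow> fin_linear (T \<circ> U)"
  by (simp add: fin_linear_def)

lemma fin_linear_sum_maps:
  assumes "finite I" and T: "\<And>i. fin_linear (T i)"
  shows "fin_linear (\<lambda>x c. \<Sum>i\<in>I. T i x c)"
  unfolding fin_linear_def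
  using assms
  by (simp add: finite_supp_sum fin_linear_finite fin_linear_add[OF T] fin_linear_scale[OF T]
      sum.distrib sum_distrib_left)

section \<open>Congruence modulo the tensor relations\<close>

lemma finite_supp_relgen: "finite (supp (relgen m w i \<sigma>))"
  unfolding relgen_def by (intro finite_supp_diff finite_supp_scale) simp_all

lemma relsp_finite: "r \<in> relsp m n \<Longrightarrow> finite (supp r)"
  by (induction rule: relsp.induct) (simp_all add: finite_supp_add finite_supp_scale finite_supp_relgen)

lemma relsp_add: "q \<in> relsp m n \<Longrightarrow> r \<in> relsp m n \<Longrightarrow> (\<lambda>c. r c + q c) \<in> relsp m n"
proof (induction rule: relsp.induct)
  case zero
  then show ?case by simp
next
  case (step q i w \<sigma> a)
  then have "(\<lambda>c. (r c + q c) + a * relgen m w i \<sigma> c) \<in> relsp m n" by (intro relsp.step)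
  then show ?case by (simp add: add.assoc)
qed

lemma relsp_scale: "r \<in> relsp m n \<Longrightarrow> (\<lambda>c. a * r c) \<in> relsp m n"
proof (induction rule: relsp.induct)
  case zero
  then show ?case by (simp add: relsp.zero)
next
  case (step q i w \<sigma> b)
  then have "(\<lambda>c. a * q c + (a * b) * relgen m w i \<sigma> c) \<in> relsp m n" by (intro relsp.step)
  then show ?case by (simp add: distrib_left mult.assoc)
qed

lemma relgen_in_relsp:
  "1 \<le> i \<Longrightarrow> i < length w \<Longrightarrow> set w \<subseteq> {1..m+n} \<Longrightarrow> \<sigma> \<in> Sinf \<Longrightarrow> relgen m w i \<sigma> \<in> relsp m n"
  using relsp.step[OF relsp.zero, of i w m n \<sigma> 1] by simp

lemma relsp_sum: "finite J \<Longrightarrow> (\<And>j. j \<in> J \<Longrightarrow> g j \<in> relsp m n) \<Longrightarrow> (\<lambda>c. \<Sum>j\<in>J. g j c) \<in> relsp m n"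
  by (induction J rule: finite_induct) (auto simp: relsp.zero relsp_add)

definition preserves_relsp :: "nat \<Rightarrow> nat \<Rightarrow> (fr \<Rightarrow> fr) \<Rightarrow> bool" where
  "preserves_relsp m n T \<longleftrightarrow> (\<forall>w i \<sigma>. 1 \<le> i \<longrightarrow> i < length w \<longrightarrow> set w \<subseteq> {1..m+n} \<longrightarrow> \<sigma> \<in> Sinf
     \<longrightarrow> T (relgen m w i \<sigma>) \<in> relsp m n)"

lemma relsp_image:
  assumes T: "fin_linear T" "preserves_relsp m n T" and "r \<in> relsp m n"
  shows "T r \<in> relsp m n"
  using assms(3)
proof (induction rule: relsp.induct)
  case zero
  then show ?case using T by (simp add: fin_linear_zero relsp.zero)
next
  case (step q i w \<sigma> a)
  have "T (\<lambda>c. q c + a * relgen m w i \<sigma> c) = (\<lambda>c. T q c + a * T (relgen m w i \<sigma>) c)"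
    using step.hyps(1) relsp_finite finite_supp_relgen
    by (simp add: fin_linear_add[OF T(1)] fin_linear_scale[OF T(1)] finite_supp_scale)
  moreover have "T (relgen m w i \<sigma>) \<in> relsp m n"
    using T(2) step.hyps by (simp add: preserves_relsp_def)
  ultimately show ?case using step.IH by (simp add: relsp_add relsp_scale)
qed

text \<open>\<open>rel_cong m n x y\<close>: \<open>x\<close> and \<open>y\<close> represent the same element of \<open>T(V) = \<Oplus>\<^sub>d V\<^sup>\<otimes>\<^sup>d \<otimes>\<^sub>\<complex>\<^sub>\<SS>\<^sub>d \<complex>\<SS>\<^sub>\<infinity>\<close>.\<close>

definition rel_cong :: "nat \<Rightarrow> nat \<Rightarrow> fr \<Rightarrow> fr \<Rightarrow> bool" where
  "rel_cong m n x y \<longleftrightarrow> (\<lambda>c. x c - y c) \<in> relsp m n"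

lemma rel_cong_refl: "rel_cong m n x x"
  by (simp add: rel_cong_def relsp.zero)

lemma rel_cong_sym: "rel_cong m n x y \<Longrightarrow> rel_cong m n y x"
  unfolding rel_cong_def using relsp_scale[of "\<lambda>c. x c - y c" m n "-1"] by simp

lemma rel_cong_trans: "rel_cong m n x y \<Longrightarrow> rel_cong m n y z \<Longrightarrow> rel_cong m n x z"
  unfolding rel_cong_def using relsp_add[of "\<lambda>c. y c - z c" m n "\<lambda>c. x c - y c"] by simp

lemma rel_cong_scale: "rel_cong m n x y \<Longrightarrow> rel_cong m n (\<lambda>c. a * x c) (\<lambda>c. a * y c)"
  unfolding rel_cong_def using relsp_scale[of "\<lambda>c. x c - y c" m n a] by (simp add: right_diff_distrib)

lemma rel_cong_sum:
  "finite J \<Longrightarrow> (\<And>j. j \<in> J \<Longrightarrow> rel_cong m n (f j) (g j)) \<Longrightarrow>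
   rel_cong m n (\<lambda>c. \<Sum>j\<in>J. f j c) (\<lambda>c. \<Sum>j\<in>J. g j c)"
  unfolding rel_cong_def using relsp_sum[of J "\<lambda>j c. f j c - g j c" m n] by (simp add: sum_subtractf)

lemma rel_cong_image:
  assumes "fin_linear T" "preserves_relsp m n T"
    and "rel_cong m n x y" "finite (supp x)" "finite (supp y)"
  shows "rel_cong m n (T x) (T y)"
  using relsp_image[OF assms(1,2), of "\<lambda>c. x c - y c"] assms(3) fin_linear_diff[OF assms(1,4,5)]
  by (simp add: rel_cong_def)

lemma rel_cong_on_basis:
  assumes T: "fin_linear T" and x: "finite (supp x)"
    and basis: "\<And>b. b \<in> supp x \<Longrightarrow> rel_cong m n (T (delta b)) (\<lambda>c. a * delta b c)"
  shows "rel_cong m n (T x) (\<lambda>c. a * x c)"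
proof -
  have "T x = T (\<lambda>c. \<Sum>b\<in>supp x. x b * delta b c)"
    using arg_cong[OF delta_expansion[OF x], of T] .
  also have "\<dots> = (\<lambda>c. \<Sum>b\<in>supp x. T (\<lambda>c. x b * delta b c) c)"
    using x by (intro fin_linear_sum[OF T]) (simp_all add: finite_supp_scale)
  finally have "T x = (\<lambda>c. \<Sum>b\<in>supp x. x b * T (delta b) c)"
    by (simp add: fin_linear_scale[OF T])
  moreover have "rel_cong m n (\<lambda>c. \<Sum>b\<in>supp x. x b * T (delta b) c) (\<lambda>c. \<Sum>b\<in>supp x. x b * (a * delta b c))"
    using x basis by (intro rel_cong_sum rel_cong_scale) auto
  moreover have "(\<lambda>c. \<Sum>b\<in>supp x. x b * (a * delta b c)) = (\<lambda>c. a * x c)"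
    by (subst (2) delta_expansion[OF x]) (simp add: sum_distrib_left algebra_simps)
  ultimately show ?thesis by simp
qed

section \<open>The operators \<open>L(e\<^sub>i)\<close> and \<open>L(e\<^sub>i\<^sup>*)\<close>\<close>

lemma Lvec_delta: "Lvec i (delta (w, \<sigma>)) = delta (w @ [i], \<sigma>)"
  by (simp add: Lvec_def lin_delta)

lemma fin_linear_Lvec: "fin_linear (Lvec i)"
  unfolding Lvec_def by (rule fin_linear_lin) auto

lemma preserves_relsp_Lvec: "i \<in> {1..m+n} \<Longrightarrow> preserves_relsp m n (Lvec i)"
  unfolding preserves_relsp_def
proof (intro allI impI)
  fix w j \<sigma> assume a: "i \<in> {1..m+n}" "1 \<le> j" "j < length w" "set w \<subseteq> {1..m+n}" "\<sigma> \<in> Sinf"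
  have "swapw (w @ [i]) j = swapw w j @ [i]"
    using a by (simp add: swapw_def nth_append list_update_append1 less_imp_diff_less)
  then have "Lvec i (relgen m w j \<sigma>) = relgen m (w @ [i]) j \<sigma>"
    unfolding relgen_def using a
    by (simp add: fin_linear_diff[OF fin_linear_Lvec] fin_linear_scale[OF fin_linear_Lvec]
        finite_supp_scale Lvec_delta nth_append)
  also have "\<dots> \<in> relsp m n" using a by (intro relgen_in_relsp) auto
  finally show "Lvec i (relgen m w j \<sigma>) \<in> relsp m n" .
qed

definition odd_count :: "nat \<Rightarrow> nat list \<Rightarrow> nat \<Rightarrow> nat \<Rightarrow> nat" where
  "odd_count m w k j = card {l. k < l \<and> l \<le> j \<and> odd_idx m (w ! (l - 1))}"

lemma odd_count_refl: "odd_count m w k k = 0"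
  by (simp add: odd_count_def)

lemma odd_count_Suc: "k \<le> j \<Longrightarrow> odd_count m w k (Suc j) = odd_count m w k j + par m (w ! j)"
proof -
  assume "k \<le> j"
  let ?A = "{l. k < l \<and> l \<le> j \<and> odd_idx m (w ! (l - 1))}"
  have "finite ?A" by (rule finite_subset[of _ "{..j}"]) auto
  moreover have "{l. k < l \<and> l \<le> Suc j \<and> odd_idx m (w ! (l - 1))} =
      (if odd_idx m (w ! j) then insert (Suc j) ?A else ?A)"
    using \<open>k \<le> j\<close> by (auto simp: le_Suc_eq)
  ultimately show ?thesis by (simp add: odd_count_def par_def)
qed

lemma Lcov_delta:
  "Lcov m i (delta (w, \<sigma>)) = (\<lambda>c. \<Sum>k\<in>{1..length w}.
     (if w ! (k - 1) = i then (-1) ^ (par m (w ! (k - 1)) * odd_count m w k (length w)) else 0) *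
       delta (del w k, cyc (length w) k \<circ> \<sigma>) c)"
  unfolding Lcov_def lin_delta odd_count_def by (auto intro!: sum.cong)

lemma supp_Lcov_delta:
  "supp (Lcov m i (delta (w, \<sigma>))) \<subseteq> (\<lambda>k. (del w k, cyc (length w) k \<circ> \<sigma>)) ` {1..length w}"
  unfolding Lcov_delta
  by (auto simp: supp_def delta_def elim!: sum.not_neutral_contains_not_neutral split: if_splits)

lemma Lcov_eq_lin: "Lcov m i = lin (\<lambda>b. Lcov m i (delta b))"
  by (simp add: Lcov_def lin_delta)

lemma fin_linear_Lcov: "fin_linear (Lcov m i)"
proof -
  have "finite (supp (Lcov m i (delta b)))" for b
    by (cases b) (auto intro: finite_subset[OF supp_Lcov_delta])
  then show ?thesis by (subst Lcov_eq_lin) (rule fin_linear_lin)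
qed

lemma supp_TbarD:
  "x \<in> Tbar_rep m n d \<Longrightarrow> (w, \<sigma>) \<in> supp x \<Longrightarrow> length w = d \<and> set w \<subseteq> {1..m+n} \<and> \<sigma> \<in> Sinf"
  by (simp add: Tbar_rep_def supp_def)

lemma finite_supp_Tbar: "x \<in> Tbar_rep m n d \<Longrightarrow> finite (supp x)"
  by (simp add: Tbar_rep_def supp_def)

lemma Lcov_Tbar_rep: assumes x: "x \<in> Tbar_rep m n (Suc d)" shows "Lcov m i x \<in> Tbar_rep m n d"
proof -
  have "length w' = d \<and> set w' \<subseteq> {1..m+n} \<and> \<tau> \<in> Sinf" if wt: "(w', \<tau>) \<in> supp (Lcov m i x)" for w' \<tau>
  proof -
    have "supp (Lcov m i x) \<subseteq> (\<Union>b\<in>supp x. supp (Lcov m i (delta b)))"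
      by (subst Lcov_eq_lin) (rule supp_lin_subset)
    then obtain b where "b \<in> supp x" "(w', \<tau>) \<in> supp (Lcov m i (delta b))"
      using wt by blast
    moreover obtain w \<sigma> where "b = (w, \<sigma>)" by (cases b)
    ultimately obtain k where b: "(w, \<sigma>) \<in> supp x" and k: "k \<in> {1..length w}"
      and w': "w' = del w k" "\<tau> = cyc (length w) k \<circ> \<sigma>"
      using supp_Lcov_delta[of m i w \<sigma>] by blast
    have w: "length w = Suc d" "set w \<subseteq> {1..m+n}" and \<sigma>: "\<sigma> \<in> Sinf"
      using supp_TbarD[OF x b] by auto
    have "set (del w k) \<subseteq> set w" by (auto simp: del_def dest: in_set_takeD in_set_dropD)
    moreover have "length (del w k) = d" using w k by (auto simp: del_def)
    moreover have "cyc (length w) k \<circ> \<sigma> \<in> Sinf" using k \<sigma> by (simp add: Sinf_comp cyc_in_Sinf)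
    ultimately show ?thesis using w w' by blast
  qed
  then show ?thesis
    using fin_linear_finite[OF fin_linear_Lcov finite_supp_Tbar[OF x]]
    by (auto simp: Tbar_rep_def supp_def)
qed

lemma fin_linear_Lvecs: "fin_linear (Lvecs is)"
  by (induction "is") (simp_all only: Lvecs.simps fin_linear_id fin_linear_comp fin_linear_Lvec)

lemma fin_linear_Lcovs: "fin_linear (Lcovs m is)"
  by (induction "is") (simp_all only: Lcovs.simps fin_linear_id fin_linear_comp fin_linear_Lcov)

lemma Lvecs_snoc: "Lvecs (is @ [i]) = Lvec i \<circ> Lvecs is"
  by (induction "is") auto

lemma Lcovs_snoc: "Lcovs m (is @ [i]) = Lcovs m is \<circ> Lcov m i"
  by (induction "is") auto

section \<open>Moving a factor along a pure tensor\<close>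

text \<open>\<open>move_letter w k j\<close> moves the letter in position \<open>k\<close> of \<open>w\<close> to position \<open>j \<ge> k\<close> (1-based).\<close>

definition move_letter :: "nat list \<Rightarrow> nat \<Rightarrow> nat \<Rightarrow> nat list" where
  "move_letter w k j = take (k - 1) w @ take (j - k) (drop k w) @ [w ! (k - 1)] @ drop j w"

lemma length_move_letter: "1 \<le> k \<Longrightarrow> k \<le> j \<Longrightarrow> j \<le> length w \<Longrightarrow> length (move_letter w k j) = length w"
  by (simp add: move_letter_def)

lemma nth_move_letter:
  "1 \<le> k \<Longrightarrow> k \<le> j \<Longrightarrow> j \<le> length w \<Longrightarrow> p < length w \<Longrightarrow>
   move_letter w k j ! p = (if p < k - 1 then w ! p else if p < j - 1 then w ! Suc p
     else if p = j - 1 then w ! (k - 1) else w ! p)"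
  by (auto simp: move_letter_def nth_append min_def)

lemma move_letter_refl: "1 \<le> k \<Longrightarrow> k \<le> length w \<Longrightarrow> move_letter w k k = w"
  by (rule nth_equalityI) (auto simp: length_move_letter nth_move_letter)

lemma move_letter_to_end: "move_letter w k (length w) = del w k @ [w ! (k - 1)]"
  by (simp add: move_letter_def del_def)

lemma set_move_letter: "1 \<le> k \<Longrightarrow> k \<le> length w \<Longrightarrow> set (move_letter w k j) \<subseteq> set w"
  by (auto simp: move_letter_def dest: in_set_takeD in_set_dropD)

lemma swapw_move_letter:
  "1 \<le> k \<Longrightarrow> k \<le> j \<Longrightarrow> j < length w \<Longrightarrow> swapw (move_letter w k (Suc j)) j = move_letter w k j"
  by (rule nth_equalityI) (auto simp: swapw_def length_move_letter nth_move_letter nth_list_update)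

text \<open>Each step applies one relation \<open>w.s\<^sub>j \<otimes> \<tau> \<equiv> w \<otimes> s\<^sub>j\<tau>\<close>, and the Koszul signs multiply up.\<close>

lemma move_letter_rel_cong:
  assumes k: "1 \<le> k" and kj: "k \<le> j" and jw: "j \<le> length w"
    and w: "set w \<subseteq> {1..m+n}" and \<sigma>: "\<sigma> \<in> Sinf"
  shows "rel_cong m n (delta (move_letter w k j, cyc j k \<circ> \<sigma>))
     (\<lambda>c. (-1) ^ (par m (w ! (k - 1)) * odd_count m w k j) * delta (w, \<sigma>) c)"
  using kj jw
proof (induction j rule: dec_induct)
  case base
  then show ?case using k by (simp add: move_letter_refl cyc_refl odd_count_refl rel_cong_refl)
next
  case (step j)
  let ?u = "move_letter w k (Suc j)" and ?\<tau> = "cyc j k \<circ> \<sigma>"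
  let ?e = "par m (w ! (k - 1)) * odd_count m w k j"
  let ?sg = "(-1::complex) ^ (par m (?u ! (j - 1)) * par m (?u ! j))"
  have "relgen m ?u j ?\<tau> \<in> relsp m n"
    using step k w \<sigma> set_move_letter[of k w "Suc j"]
    by (intro relgen_in_relsp Sinf_comp cyc_in_Sinf) (auto simp: length_move_letter)
  then have "rel_cong m n (\<lambda>c. ?sg * delta (swapw ?u j, ?\<tau>) c) (delta (?u, s j \<circ> ?\<tau>))"
    by (simp add: rel_cong_def relgen_def)
  then have "rel_cong m n (delta (?u, s j \<circ> ?\<tau>)) (\<lambda>c. ?sg * delta (swapw ?u j, ?\<tau>) c)"
    by (rule rel_cong_sym)
  then have moved: "rel_cong m n (delta (?u, cyc (Suc j) k \<circ> \<sigma>)) (\<lambda>c. ?sg * delta (move_letter w k j, ?\<tau>) c)"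
    using step k by (simp add: swapw_move_letter cyc_Suc o_assoc)
  have rest: "rel_cong m n (\<lambda>c. ?sg * delta (move_letter w k j, ?\<tau>) c)
      (\<lambda>c. ?sg * ((-1) ^ ?e * delta (w, \<sigma>) c))"
    by (intro rel_cong_scale step.IH) (use step in simp)
  have "?u ! (j - 1) = w ! j" "?u ! j = w ! (k - 1)"
    using step.hyps step.prems k by (auto simp: nth_move_letter)
  moreover have "odd_count m w k (Suc j) = odd_count m w k j + par m (w ! j)"
    using step.hyps by (simp add: odd_count_Suc)
  ultimately have "?sg * (-1) ^ ?e = (-1) ^ (par m (w ! (k - 1)) * odd_count m w k (Suc j))"
    by (simp add: distrib_left power_add mult.commute)
  then have sign: "(\<lambda>c. ?sg * ((-1) ^ ?e * delta (w, \<sigma>) c)) =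
      (\<lambda>c. (-1) ^ (par m (w ! (k - 1)) * odd_count m w k (Suc j)) * delta (w, \<sigma>) c)"
    by (simp only: mult.assoc[symmetric])
  show ?case using rel_cong_trans[OF moved rest] unfolding sign .
qed

section \<open>The number operator\<close>

definition number_op :: "nat \<Rightarrow> nat \<Rightarrow> fr \<Rightarrow> fr" where
  "number_op m n x = (\<lambda>c. \<Sum>i\<in>{1..m+n}. Lvec i (Lcov m i x) c)"

lemma fin_linear_number_op: "fin_linear (number_op m n)"
  unfolding number_op_def
  using fin_linear_sum_maps[OF finite_atLeastAtMost fin_linear_comp[OF fin_linear_Lvec fin_linear_Lcov]]
  by (simp add: comp_def)

lemma number_op_delta:
  assumes w: "set w \<subseteq> {1..m+n}"
  shows "number_op m n (delta (w, \<sigma>)) = (\<lambda>c. \<Sum>k\<in>{1..length w}.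
     (-1) ^ (par m (w ! (k - 1)) * odd_count m w k (length w)) *
       delta (move_letter w k (length w), cyc (length w) k \<circ> \<sigma>) c)"
proof -
  let ?sg = "\<lambda>k. (-1::complex) ^ (par m (w ! (k - 1)) * odd_count m w k (length w))"
  let ?t = "\<lambda>k i. delta (del w k @ [i], cyc (length w) k \<circ> \<sigma>)"
  have if_times: "(if P then a else 0) * b = (if P then a * b else 0)" for P and a b :: complex
    by simp
  have "Lvec i (Lcov m i (delta (w, \<sigma>))) = (\<lambda>c. \<Sum>k\<in>{1..length w}.
        (if w ! (k - 1) = i then ?sg k else 0) * ?t k i c)" for i
    unfolding Lcov_delta
    by (simp add: fin_linear_sum[OF fin_linear_Lvec] fin_linear_scale[OF fin_linear_Lvec]
        finite_supp_scale Lvec_delta)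
  then have "number_op m n (delta (w, \<sigma>)) = (\<lambda>c. \<Sum>i\<in>{1..m+n}. \<Sum>k\<in>{1..length w}.
        (if w ! (k - 1) = i then ?sg k * ?t k i c else 0))"
    by (simp add: number_op_def if_times)
  also have "\<dots> = (\<lambda>c. \<Sum>k\<in>{1..length w}. ?sg k * ?t k (w ! (k - 1)) c)"
  proof (rule ext)
    fix c
    have "w ! (k - 1) \<in> {1..m+n}" if "k \<in> {1..length w}" for k
      by (intro subsetD[OF w] nth_mem) (use that in auto)
    then show "(\<Sum>i\<in>{1..m+n}. \<Sum>k\<in>{1..length w}. if w ! (k - 1) = i then ?sg k * ?t k i c else 0)
        = (\<Sum>k\<in>{1..length w}. ?sg k * ?t k (w ! (k - 1)) c)"
      by (subst sum.swap) (simp add: sum.delta)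
  qed
  finally show ?thesis by (simp add: move_letter_to_end)
qed

lemma number_op_rel_cong:
  assumes x: "x \<in> Tbar_rep m n d"
  shows "rel_cong m n (number_op m n x) (\<lambda>c. of_nat d * x c)"
  using fin_linear_number_op finite_supp_Tbar[OF x]
proof (rule rel_cong_on_basis)
  fix b assume "b \<in> supp x"
  then obtain w \<sigma> where b: "b = (w, \<sigma>)" and w: "length w = d" "set w \<subseteq> {1..m+n}" and \<sigma>: "\<sigma> \<in> Sinf"
    using supp_TbarD[OF x] by (cases b) auto
  let ?sg = "\<lambda>k. (-1::complex) ^ (par m (w ! (k - 1)) * odd_count m w k (length w))"
  have "rel_cong m n (\<lambda>c. \<Sum>k\<in>{1..length w}. ?sg k *
        delta (move_letter w k (length w), cyc (length w) k \<circ> \<sigma>) c)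
      (\<lambda>c. \<Sum>k\<in>{1..length w}. ?sg k * (?sg k * delta (w, \<sigma>) c))"
    using w \<sigma> by (intro rel_cong_sum rel_cong_scale move_letter_rel_cong) auto
  moreover have "?sg k * (?sg k * z) = z" for k z
    by (simp add: mult.assoc[symmetric] power_mult_distrib[symmetric])
  ultimately show "rel_cong m n (number_op m n (delta b)) (\<lambda>c. of_nat d * delta b c)"
    using b w by (simp add: number_op_delta)
qed

section \<open>The operators \<open>A\<^sub>d\<close>\<close>

lemma sum_lists_length_Suc:
  assumes "finite I"
  shows "(\<Sum>xs\<in>{xs. length xs = Suc d \<and> set xs \<subseteq> I}. f xs) =
    (\<Sum>i\<in>I. \<Sum>xs\<in>{xs. length xs = d \<and> set xs \<subseteq> I}. f (xs @ [i]))"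
proof -
  have "{xs. length xs = Suc d \<and> set xs \<subseteq> I} =
      (\<lambda>(xs, i). xs @ [i]) ` ({xs. length xs = d \<and> set xs \<subseteq> I} \<times> I)"
  proof (intro equalityI subsetI)
    fix xs assume xs: "xs \<in> {xs. length xs = Suc d \<and> set xs \<subseteq> I}"
    then have "xs \<noteq> []" by auto
    then have "xs = butlast xs @ [last xs]" by simp
    moreover from \<open>xs \<noteq> []\<close> have "set (butlast xs) \<subseteq> set xs" "last xs \<in> set xs"
      by (auto dest: in_set_butlastD)
    ultimately show "xs \<in> (\<lambda>(xs, i). xs @ [i]) ` ({xs. length xs = d \<and> set xs \<subseteq> I} \<times> I)"
      using xs by (intro image_eqI[of _ _ "(butlast xs, last xs)"]) auto
  qed auto
  moreover have "inj_on (\<lambda>(xs, i). xs @ [i]) ({xs. length xs = d \<and> set xs \<subseteq> I} \<times> I)"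
    by (rule inj_onI) auto
  ultimately have "(\<Sum>xs\<in>{xs. length xs = Suc d \<and> set xs \<subseteq> I}. f xs) =
      (\<Sum>(xs, i)\<in>{xs. length xs = d \<and> set xs \<subseteq> I} \<times> I. f (xs @ [i]))"
    by (simp add: sum.reindex comp_def case_prod_unfold)
  also have "\<dots> = (\<Sum>xs\<in>{xs. length xs = d \<and> set xs \<subseteq> I}. \<Sum>i\<in>I. f (xs @ [i]))"
    by (rule sum.cartesian_product[symmetric])
  also have "\<dots> = (\<Sum>i\<in>I. \<Sum>xs\<in>{xs. length xs = d \<and> set xs \<subseteq> I}. f (xs @ [i]))"
    by (rule sum.swap)
  finally show ?thesis .
qed

lemma finite_lists_in: "finite I \<Longrightarrow> finite {xs. length xs = d \<and> set xs \<subseteq> I}"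
  using finite_lists_length_eq[of I d] by (simp add: conj_commute)

lemma finite_supp_A: "finite (supp x) \<Longrightarrow> finite (supp (A m n d x))"
  unfolding A_def
  by (intro finite_supp_scale finite_supp_sum finite_lists_in finite_atLeastAtMost
      fin_linear_finite[OF fin_linear_Lvecs] fin_linear_finite[OF fin_linear_Lcovs])

lemma A_Suc:
  assumes x: "finite (supp x)"
  shows "A m n (Suc d) x = (\<lambda>c. (1 / of_nat (Suc d)) * (\<Sum>i\<in>{1..m+n}. Lvec i (A m n d (Lcov m i x)) c))"
proof
  fix c
  let ?L = "{xs :: nat list. length xs = d \<and> set xs \<subseteq> {1..m+n}}"
  have y: "finite (supp (Lcov m i x))" for i
    by (rule fin_linear_finite[OF fin_linear_Lcov x])
  have "(\<Sum>xs\<in>?L. Lvec i (Lvecs xs (Lcovs m xs (Lcov m i x))) c) =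
      of_nat (fact d) * Lvec i (A m n d (Lcov m i x)) c" for i
  proof -
    have "Lvec i (\<lambda>c. \<Sum>xs\<in>?L. Lvecs xs (Lcovs m xs (Lcov m i x)) c) =
        (\<lambda>c. \<Sum>xs\<in>?L. Lvec i (Lvecs xs (Lcovs m xs (Lcov m i x))) c)"
      by (intro fin_linear_sum fin_linear_Lvec finite_lists_in finite_atLeastAtMost
          fin_linear_finite[OF fin_linear_Lvecs] fin_linear_finite[OF fin_linear_Lcovs] y)
    from fun_cong[OF this, of c]
    have "(\<Sum>xs\<in>?L. Lvec i (Lvecs xs (Lcovs m xs (Lcov m i x))) c) =
        Lvec i (\<lambda>c. of_nat (fact d) * A m n d (Lcov m i x) c) c"
      by (simp add: A_def)
    also have "\<dots> = of_nat (fact d) * Lvec i (A m n d (Lcov m i x)) c"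
      by (simp add: fin_linear_scale[OF fin_linear_Lvec finite_supp_A[OF y]])
    finally show ?thesis .
  qed
  then have "A m n (Suc d) x c =
      1 / of_nat (fact (Suc d)) * (\<Sum>i\<in>{1..m+n}. of_nat (fact d) * Lvec i (A m n d (Lcov m i x)) c)"
    unfolding A_def[of m n "Suc d"]
    by (simp add: sum_lists_length_Suc Lvecs_snoc Lcovs_snoc)
  also have "\<dots> = 1 / of_nat (Suc d) * (\<Sum>i\<in>{1..m+n}. Lvec i (A m n d (Lcov m i x)) c)"
  proof -
    have "(of_nat (fact (Suc d)) :: complex) = of_nat (Suc d) * fact d"
      by (simp only: fact_Suc of_nat_mult of_nat_fact of_nat_id)
    then show ?thesis by (simp add: sum_distrib_left[symmetric] del: of_nat_Suc)
  qed
  finally show "A m n (Suc d) x c = 1 / of_nat (Suc d) * (\<Sum>i\<in>{1..m+n}. Lvec i (A m n d (Lcov m i x)) c)" .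
qed

lemma A_rel_cong: "x \<in> Tbar_rep m n d \<Longrightarrow> rel_cong m n (A m n d x) x"
proof (induction d arbitrary: x)
  case 0
  have "{xs :: nat list. length xs = 0 \<and> set xs \<subseteq> {1..m+n}} = {[]}" by auto
  then show ?case by (simp add: A_def rel_cong_refl)
next
  case (Suc d)
  let ?I = "{1..m+n}"
  have "rel_cong m n (\<lambda>c. \<Sum>i\<in>?I. Lvec i (A m n d (Lcov m i x)) c) (number_op m n x)"
    unfolding number_op_def
  proof (rule rel_cong_sum[OF finite_atLeastAtMost])
    fix i assume "i \<in> ?I"
    have y: "Lcov m i x \<in> Tbar_rep m n d" by (rule Lcov_Tbar_rep[OF Suc.prems])
    show "rel_cong m n (Lvec i (A m n d (Lcov m i x))) (Lvec i (Lcov m i x))"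
      using preserves_relsp_Lvec[OF \<open>i \<in> ?I\<close>] Suc.IH[OF y]
        finite_supp_A[OF finite_supp_Tbar[OF y]] finite_supp_Tbar[OF y]
      by (rule rel_cong_image[OF fin_linear_Lvec])
  qed
  then have "rel_cong m n (\<lambda>c. \<Sum>i\<in>?I. Lvec i (A m n d (Lcov m i x)) c) (\<lambda>c. of_nat (Suc d) * x c)"
    using number_op_rel_cong[OF Suc.prems] by (rule rel_cong_trans)
  then have "rel_cong m n (\<lambda>c. 1 / of_nat (Suc d) * (\<Sum>i\<in>?I. Lvec i (A m n d (Lcov m i x)) c))
      (\<lambda>c. 1 / of_nat (Suc d) * (of_nat (Suc d) * x c))"
    by (rule rel_cong_scale)
  moreover have "(\<lambda>c. 1 / of_nat (Suc d) * (of_nat (Suc d) * x c)) = x"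
    by (rule ext) (simp del: of_nat_Suc)
  ultimately show ?case
    unfolding A_Suc[OF finite_supp_Tbar[OF Suc.prems]] by (simp only:)
qed

theorem proposition3p6:
  fixes m n d :: nat and x :: fr
  assumes "1 \<le> m" and "1 \<le> n" and "1 \<le> d"
    and "x \<in> Tbar_rep m n d"
  shows "(\<lambda>c. A m n d x c - x c) \<in> relsp m n"
  using A_rel_cong[OF assms(4)] by (simp add: rel_cong_def)

end
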